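(* Let $G=(X,\Sigma,\delta,X_0)$ be an NFA with observable events $\Sigma_o$ and a nonempty set of secret states $X_S\subseteq X$. Then $G$ is Inf-SSO w.r.t. $\Sigma_o$ and $X_S$ if and only if $G$ is $(|\hat X|\,2^{|X\setminus X_S|}-1)$-SSO w.r.t. $\Sigma_o$ and $X_S$, where $\hat X$ is the set of states of $G$ reachable from $X_S$.
   Context: An NFA is $G=(X,\Sigma,\delta,X_0)$ with finite state set $X$, finite event set $\Sigma$, initial states $X_0\subseteq X$, and transition function $\delta:X\times\Sigma\to 2^X$ extended to strings in the usual way. $\Sigma=\Sigma_o\dot\cup\Sigma_{uo}$, and $P:\Sigma^*\to\Sigma_o^*$ is the natural projection erasing unobservable events. $X_{NS}=X\setminus X_S$. A run $x_0\xrightarrow{s_1}x_1\cdots\xrightarrow{s_n}x_n$ means $x_{k+1}\in\delta(x_k,s_{k+1})$, written $x_0\xrightarrow{s}x_n$; it is non-secret if all its states lie in $X_{NS}$. $\hat X$ is the set of states $x$ with $x\in\delta(x_s,w)$ for some $x_s\in X_S$, $w\in\Sigma^*$ (including $X_S$ itself). $K$-SSO ($K\in\mathbb N$): $G$ is strongly $K$-step opaque w.r.t. $\Sigma_o$ and $X_S$ if for every run $x_0\xrightarrow{s}x_s\xrightarrow{t}x_t$ with $x_0\in X_0$, $x_s\in X_S$, $|P(t)|\le K$, there exists a run $x_0'\xrightarrow{s'}x_s'\xrightarrow{t'}x_t'$ with $x_0'\in X_0$, $P(s')=P(s)$, $P(t')=P(t)$, and the subrun $x_s'\xrightarrow{t'}x_t'$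 non-secret. Inf-SSO (strong infinite-step opacity): the same condition required for all such runs with no bound on $|P(t)|$, i.e. $G$ is $K$-SSO for every $K\in\mathbb N$. *)

theory Defs
  imports Main
begin

definition nfa :: "'x set \<Rightarrow> 'e set \<Rightarrow> ('x \<Rightarrow> 'e \<Rightarrow> 'x set) \<Rightarrow> 'x set \<Rightarrow> bool" where
  "nfa X Sig delta X0 \<longleftrightarrow> finite X \<and> finite Sig \<and> X0 \<subseteq> X \<and>
     (\<forall>x\<in>X. \<forall>e\<in>Sig. delta x e \<subseteq> X)"

definition proj :: "'e set \<Rightarrow> 'e list \<Rightarrow> 'e list" where
  "proj SigO s = filter (\<lambda>e. e \<in> SigO) s"

text \<open>A run from x0: a list of steps (event, next state); run_ok checks each
  transition x_{k+1} \<in> delta x_k s_{k+1} with s_{k+1} \<in> Sig.\<close>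
fun run_ok :: "'e set \<Rightarrow> ('x \<Rightarrow> 'e \<Rightarrow> 'x set) \<Rightarrow> 'x \<Rightarrow> ('e \<times> 'x) list \<Rightarrow> bool" where
  "run_ok Sig delta x [] = True"
| "run_ok Sig delta x ((e, y) # r) \<longleftrightarrow> e \<in> Sig \<and> y \<in> delta x e \<and> run_ok Sig delta y r"

definition run_end :: "'x \<Rightarrow> ('e \<times> 'x) list \<Rightarrow> 'x" where
  "run_end x r = (if r = [] then x else snd (last r))"

definition run_label :: "('e \<times> 'x) list \<Rightarrow> 'e list" where
  "run_label r = map fst r"

definition run_states :: "'x \<Rightarrow> ('e \<times> 'x) list \<Rightarrow> 'x set" where
  "run_states x r = insert x (snd ` set r)"

fun delta_star :: "('x \<Rightarrow> 'e \<Rightarrow> 'x set) \<Rightarrow> 'x \<Rightarrow> 'e list \<Rightarrow> 'x set" where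
  "delta_star delta x [] = {x}"
| "delta_star delta x (e # w) = (\<Union>y\<in>delta x e. delta_star delta y w)"

definition Xhat :: "'e set \<Rightarrow> ('x \<Rightarrow> 'e \<Rightarrow> 'x set) \<Rightarrow> 'x set \<Rightarrow> 'x set" where
  "Xhat Sig delta XS = {x. \<exists>xs\<in>XS. \<exists>w\<in>lists Sig. x \<in> delta_star delta xs w}"

definition K_SSO :: "'x set \<Rightarrow> 'e set \<Rightarrow> ('x \<Rightarrow> 'e \<Rightarrow> 'x set) \<Rightarrow> 'x set \<Rightarrow> 'e set \<Rightarrow> 'x set \<Rightarrow> nat \<Rightarrow> bool" where
  "K_SSO X Sig delta X0 SigO XS K \<longleftrightarrow>
    (\<forall>x0 r1 r2. x0 \<in> X0 \<and> run_ok Sig delta x0 r1 \<and> run_end x0 r1 \<in> XS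
        \<and> run_ok Sig delta (run_end x0 r1) r2
        \<and> length (proj SigO (run_label r2)) \<le> K \<longrightarrow>
      (\<exists>x0' r1' r2'. x0' \<in> X0 \<and> run_ok Sig delta x0' r1'
        \<and> run_ok Sig delta (run_end x0' r1') r2'
        \<and> proj SigO (run_label r1') = proj SigO (run_label r1)
        \<and> proj SigO (run_label r2') = proj SigO (run_label r2)
        \<and> run_states (run_end x0' r1') r2' \<subseteq> X - XS))"

definition Inf_SSO :: "'x set \<Rightarrow> 'e set \<Rightarrow> ('x \<Rightarrow> 'e \<Rightarrow> 'x set) \<Rightarrow> 'x set \<Rightarrow> 'e set \<Rightarrow> 'x set \<Rightarrow> bool" where
  "Inf_SSO X Sig delta X0 SigO XS \<longleftrightarrow> (\<forall>K. K_SSO X Sig delta X0 SigO XS K)"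

end

theory Submission
  imports Defs
begin

text \<open>Fix the observation s of a run into a secret state. For a later observation t let E(t)
  be the set of states in which the system can be after a run observed as s followed by a
  non-secret run observed as t. Strong K-step opacity says that E(t) is nonempty for every t of
  length at most K observed along a run from the secret state. E is a right congruence:
  E(t) = E(t') implies E(t w) = E(t' w). Along a run from the secret state, pair the current
  state, which lies in \<open>Xhat\<close>, with the value of E on the observation so far, a subset of the
  non-secret states; there are only \<open>card Xhat * 2 ^ card (X - XS)\<close> such pairs. A run with at
  least that many observations therefore revisits a pair, and cutting out the loop between the
  two visits gives a run with fewer observations and the same value of E. So every value of E
  is already attained on an observation shorter than the bound.\<close>

lemma run_end_Nil [simp]: "run_end x [] = x"
  by (simp add: run_end_def)

lemma run_end_Cons [simp]: "run_end x ((e, y) # r) = run_end y r"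
  by (cases r) (simp_all add: run_end_def)

lemma run_end_append [simp]: "run_end x (r @ r') = run_end (run_end x r) r'"
  by (induction r arbitrary: x) auto

lemma run_ok_append [simp]:
  "run_ok Sig delta x (r @ r') \<longleftrightarrow> run_ok Sig delta x r \<and> run_ok Sig delta (run_end x r) r'"
  by (induction r arbitrary: x) auto

lemma run_ok_take: "run_ok Sig delta x r \<Longrightarrow> run_ok Sig delta x (take p r)"
  by (metis append_take_drop_id run_ok_append)

lemma run_ok_drop: "run_ok Sig delta x r \<Longrightarrow> run_ok Sig delta (run_end x (take p r)) (drop p r)"
  by (metis append_take_drop_id run_ok_append)

lemma run_states_append:
  "run_states x (r @ r') = run_states x r \<union> run_states (run_end x r) r'"
  by (induction r arbitrary: x) (auto simp: run_states_def)

lemma run_end_in_run_states: "run_end x r \<in> run_states x r"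
proof (induction r arbitrary: x)
  case (Cons p r)
  then show ?case by (cases p) (auto simp: run_states_def)
qed (simp add: run_states_def)

lemma proj_run_label_Nil [simp]: "proj S (run_label []) = []"
  by (simp add: proj_def run_label_def)

lemma proj_run_label_Cons [simp]:
  "proj S (run_label ((e, y) # r)) = (if e \<in> S then e # proj S (run_label r) else proj S (run_label r))"
  by (simp add: proj_def run_label_def)

lemma proj_run_label_append [simp]:
  "proj S (run_label (r @ r')) = proj S (run_label r) @ proj S (run_label r')"
  by (simp add: proj_def run_label_def)

lemma proj_run_label_eq_appendE:
  assumes "proj S (run_label r) = u @ w"
  obtains a b where "r = a @ b" "proj S (run_label a) = u" "proj S (run_label b) = w"
  using assms
proof (induction r arbitrary: u thesis)
  case Nil
  then show ?case by simp
next
  case (Cons p r)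
  obtain e y where p: "p = (e, y)" by fastforce
  consider "u = []" | "u \<noteq> []" "e \<notin> S" | u' where "e \<in> S" "u = e # u'" "proj S (run_label r) = u' @ w"
    using Cons.prems(2) p by (cases u) (auto split: if_splits)
  then show ?case
  proof cases
    case 1
    then show ?thesis using Cons.prems(1)[of "[]" "p # r"] Cons.prems(2) by simp
  next
    case 2
    then have "proj S (run_label r) = u @ w" using Cons.prems(2) p by simp
    then obtain a b where "r = a @ b" "proj S (run_label a) = u" "proj S (run_label b) = w"
      using Cons.IH by blast
    then show ?thesis using Cons.prems(1)[of "p # a" b] 2 p by simp
  next
    case 3
    then obtain a b where "r = a @ b" "proj S (run_label a) = u'" "proj S (run_label b) = w"
      using Cons.IH by blast
    then show ?thesis using Cons.prems(1)[of "p # a" b] 3 p by simp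
  qed
qed

lemma exists_prefix_with_observation_length:
  "k \<le> length (proj S (run_label r)) \<Longrightarrow> \<exists>p. length (proj S (run_label (take p r))) = k"
proof (induction r arbitrary: k)
  case Nil
  then show ?case by simp
next
  case (Cons q r)
  obtain e y where q: "q = (e, y)" by fastforce
  show ?case
  proof (cases "k = 0")
    case True
    then show ?thesis by (intro exI[of _ 0]) simp
  next
    case False
    have "(if e \<in> S then k - 1 else k) \<le> length (proj S (run_label r))"
      using Cons.prems q False by (auto split: if_splits)
    then obtain p where "length (proj S (run_label (take p r))) = (if e \<in> S then k - 1 else k)"
      using Cons.IH by blast
    then show ?thesis using False q by (intro exI[of _ "Suc p"]) auto
  qed
qed

lemma run_end_in_delta_star:
  "run_ok Sig delta x r \<Longrightarrow>
    run_end x r \<in> delta_star delta x (run_label r) \<and> run_label r \<in> lists Sig"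
  by (induction Sig delta x r rule: run_ok.induct) (auto simp: run_label_def)

lemma delta_star_subset:
  assumes "nfa X Sig delta X0" "x \<in> X" "w \<in> lists Sig"
  shows "delta_star delta x w \<subseteq> X"
  using assms(2,3)
proof (induction w arbitrary: x)
  case (Cons e w)
  with assms(1) have "delta x e \<subseteq> X" by (simp add: nfa_def)
  with Cons show ?case by auto
qed simp

lemma Xhat_subset: "nfa X Sig delta X0 \<Longrightarrow> XS \<subseteq> X \<Longrightarrow> Xhat Sig delta XS \<subseteq> X"
  unfolding Xhat_def using delta_star_subset by fastforce

lemma run_end_in_Xhat:
  "xs \<in> XS \<Longrightarrow> run_ok Sig delta xs r \<Longrightarrow> run_end xs r \<in> Xhat Sig delta XS"
  unfolding Xhat_def by (blast dest: run_end_in_delta_star)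

lemma run_shortcut:
  fixes f :: "'e list \<Rightarrow> 'b"
  assumes ends: "\<And>r. run_ok Sig delta x r \<Longrightarrow> run_end x r \<in> A" and "finite A"
    and f_range: "range f \<subseteq> B" and "finite B"
    and cong: "\<And>t t' w. f t = f t' \<Longrightarrow> f (t @ w) = f (t' @ w)"
    and r: "run_ok Sig delta x r"
    and long: "card A * card B \<le> length (proj SigO (run_label r))"
  obtains r' where "run_ok Sig delta x r'"
    "length (proj SigO (run_label r')) < length (proj SigO (run_label r))"
    "f (proj SigO (run_label r')) = f (proj SigO (run_label r))"
proof -
  let ?P = "\<lambda>r. proj SigO (run_label r)"
  define n where "n = length (?P r)"
  have "\<forall>k. \<exists>p. k \<le> n \<longrightarrow> length (?P (take p r)) = k"
    using exists_prefix_with_observation_length n_def by blast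
  then obtain pos where pos: "\<And>k. k \<le> n \<Longrightarrow> length (?P (take (pos k) r)) = k"
    by metis
  define g where "g k = (run_end x (take (pos k) r), f (?P (take (pos k) r)))" for k
  have "g ` {0..n} \<subseteq> A \<times> B"
    using ends[OF run_ok_take[OF r]] f_range by (auto simp: g_def)
  then have "card (g ` {0..n}) \<le> card A * card B"
    using card_mono[of "A \<times> B"] \<open>finite A\<close> \<open>finite B\<close> by (simp add: card_cartesian_product)
  then have "\<not> inj_on g {0..n}"
    using long n_def by (auto dest: card_image)
  then obtain i j where ij: "i < j" "j \<le> n" "g i = g j"
    unfolding inj_on_def by (metis atLeastAtMost_iff linorder_neqE_nat)
  define a b where "a = take (pos i) r" and "b = drop (pos j) r"
  have ends: "run_end x a = run_end x (take (pos j) r)"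
    and vals: "f (?P a) = f (?P (take (pos j) r))"
    using ij(3) by (simp_all add: g_def a_def)
  have split: "?P r = ?P (take (pos j) r) @ ?P b"
    by (metis append_take_drop_id b_def proj_run_label_append)
  have "run_ok Sig delta x (a @ b)"
    using run_ok_take[OF r] run_ok_drop[OF r] ends by (simp add: a_def b_def)
  moreover have "f (?P (a @ b)) = f (?P r)"
    using cong[OF vals] split by simp
  moreover have "length (?P (a @ b)) < n"
    using split pos ij n_def by (simp add: a_def)
  ultimately show thesis using that n_def by blast
qed

lemma exists_run_with_short_observation:
  fixes f :: "'e list \<Rightarrow> 'b"
  assumes ends: "\<And>r. run_ok Sig delta x r \<Longrightarrow> run_end x r \<in> A" and "finite A"
    and f_range: "range f \<subseteq> B" and "finite B"
    and cong: "\<And>t t' w. f t = f t' \<Longrightarrow> f (t @ w) = f (t' @ w)"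
    and "run_ok Sig delta x r"
  shows "\<exists>r'. run_ok Sig delta x r' \<and> length (proj SigO (run_label r')) < card A * card B
    \<and> f (proj SigO (run_label r')) = f (proj SigO (run_label r))"
  using \<open>run_ok Sig delta x r\<close>
proof (induction "length (proj SigO (run_label r))" arbitrary: r rule: less_induct)
  case less
  show ?case
  proof (cases "length (proj SigO (run_label r)) < card A * card B")
    case False
    then obtain r' where "run_ok Sig delta x r'"
      "length (proj SigO (run_label r')) < length (proj SigO (run_label r))"
      "f (proj SigO (run_label r')) = f (proj SigO (run_label r))"
      using run_shortcut[OF assms(1-5) less.prems] by (metis not_less)
    then show ?thesis using less.hyps by metis
  qed (use less.prems in blast)
qed

definition nonsecret_estimate ::
  "'x set \<Rightarrow> 'e set \<Rightarrow> ('x \<Rightarrow> 'e \<Rightarrow> 'x set) \<Rightarrow> 'x set \<Rightarrow> 'e set \<Rightarrow> 'x set \<Rightarrow>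
    'e list \<Rightarrow> 'e list \<Rightarrow> 'x set"
  where
  "nonsecret_estimate X Sig delta X0 SigO XS s t =
    {run_end (run_end x0 r1) r2 | x0 r1 r2. x0 \<in> X0 \<and> run_ok Sig delta x0 r1
      \<and> run_ok Sig delta (run_end x0 r1) r2
      \<and> proj SigO (run_label r1) = s \<and> proj SigO (run_label r2) = t
      \<and> run_states (run_end x0 r1) r2 \<subseteq> X - XS}"

lemma nonsecret_estimateI:
  assumes "x0 \<in> X0" "run_ok Sig delta x0 r1" "run_ok Sig delta (run_end x0 r1) r2"
    "proj SigO (run_label r1) = s" "proj SigO (run_label r2) = t"
    "run_states (run_end x0 r1) r2 \<subseteq> X - XS"
  shows "run_end (run_end x0 r1) r2 \<in> nonsecret_estimate X Sig delta X0 SigO XS s t"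
  unfolding nonsecret_estimate_def using assms
  by (intro CollectI exI[of _ x0] exI[of _ r1] exI[of _ r2]) simp

lemma nonsecret_estimateE:
  assumes "x \<in> nonsecret_estimate X Sig delta X0 SigO XS s t"
  obtains x0 r1 r2 where "x0 \<in> X0" "run_ok Sig delta x0 r1" "run_ok Sig delta (run_end x0 r1) r2"
    "proj SigO (run_label r1) = s" "proj SigO (run_label r2) = t"
    "run_states (run_end x0 r1) r2 \<subseteq> X - XS" "x = run_end (run_end x0 r1) r2"
  using assms unfolding nonsecret_estimate_def by auto

lemma nonsecret_estimate_subset: "nonsecret_estimate X Sig delta X0 SigO XS s t \<subseteq> X - XS"
proof
  fix x assume "x \<in> nonsecret_estimate X Sig delta X0 SigO XS s t"
  then show "x \<in> X - XS"
    by (rule nonsecret_estimateE) (metis run_end_in_run_states subsetD)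
qed

lemma nonsecret_estimate_append_mono:
  assumes "nonsecret_estimate X Sig delta X0 SigO XS s t
    \<subseteq> nonsecret_estimate X Sig delta X0 SigO XS s t'"
  shows "nonsecret_estimate X Sig delta X0 SigO XS s (t @ w)
    \<subseteq> nonsecret_estimate X Sig delta X0 SigO XS s (t' @ w)"
proof
  let ?E = "nonsecret_estimate X Sig delta X0 SigO XS s"
  fix x assume "x \<in> ?E (t @ w)"
  then obtain x0 r1 r2 where x0: "x0 \<in> X0"
    and r1: "run_ok Sig delta x0 r1" "proj SigO (run_label r1) = s"
    and r2: "run_ok Sig delta (run_end x0 r1) r2" "proj SigO (run_label r2) = t @ w"
      "run_states (run_end x0 r1) r2 \<subseteq> X - XS" and x: "x = run_end (run_end x0 r1) r2"
    by (rule nonsecret_estimateE)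
  obtain a b where ab: "r2 = a @ b" "proj SigO (run_label a) = t" "proj SigO (run_label b) = w"
    using proj_run_label_eq_appendE[OF r2(2)] .
  define y where "y = run_end (run_end x0 r1) a"
  have "y \<in> ?E t"
    unfolding y_def using x0 r1 r2 ab by (intro nonsecret_estimateI) (auto simp: run_states_append)
  with assms obtain x0' r1' r2' where x0': "x0' \<in> X0"
    and r1': "run_ok Sig delta x0' r1'" "proj SigO (run_label r1') = s"
    and r2': "run_ok Sig delta (run_end x0' r1') r2'" "proj SigO (run_label r2') = t'"
      "run_states (run_end x0' r1') r2' \<subseteq> X - XS" and y: "y = run_end (run_end x0' r1') r2'"
    by (blast elim: nonsecret_estimateE)
  have "run_end (run_end x0' r1') (r2' @ b) \<in> ?E (t' @ w)"
    using x0' r1' r2' y y_def r2 ab by (intro nonsecret_estimateI) (auto simp: run_states_append)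
  then show "x \<in> ?E (t' @ w)" using x y y_def ab by simp
qed

lemma nonsecret_estimate_append_cong:
  "nonsecret_estimate X Sig delta X0 SigO XS s t = nonsecret_estimate X Sig delta X0 SigO XS s t'
    \<Longrightarrow> nonsecret_estimate X Sig delta X0 SigO XS s (t @ w)
      = nonsecret_estimate X Sig delta X0 SigO XS s (t' @ w)"
  by (metis nonsecret_estimate_append_mono order_refl subset_antisym)

lemma nonsecret_estimate_nonempty_iff:
  "nonsecret_estimate X Sig delta X0 SigO XS s t \<noteq> {} \<longleftrightarrow>
   (\<exists>x0 r1 r2. x0 \<in> X0 \<and> run_ok Sig delta x0 r1
      \<and> run_ok Sig delta (run_end x0 r1) r2
      \<and> proj SigO (run_label r1) = s \<and> proj SigO (run_label r2) = t
      \<and> run_states (run_end x0 r1) r2 \<subseteq> X - XS)"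
  unfolding nonsecret_estimate_def by auto

lemma K_SSO_iff_nonsecret_estimate:
  "K_SSO X Sig delta X0 SigO XS K \<longleftrightarrow>
    (\<forall>x0 r1 r2. x0 \<in> X0 \<and> run_ok Sig delta x0 r1 \<and> run_end x0 r1 \<in> XS
        \<and> run_ok Sig delta (run_end x0 r1) r2 \<and> length (proj SigO (run_label r2)) \<le> K \<longrightarrow>
      nonsecret_estimate X Sig delta X0 SigO XS
        (proj SigO (run_label r1)) (proj SigO (run_label r2)) \<noteq> {})"
  unfolding K_SSO_def nonsecret_estimate_nonempty_iff by simp

lemma Inf_SSO_if_K_SSO_bound:
  assumes "nfa X Sig delta X0" "XS \<subseteq> X"
    and short: "K_SSO X Sig delta X0 SigO XS (card (Xhat Sig delta XS) * 2 ^ card (X - XS) - 1)"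
  shows "Inf_SSO X Sig delta X0 SigO XS"
  unfolding Inf_SSO_def K_SSO_iff_nonsecret_estimate
proof (intro allI impI, elim conjE)
  fix K x0 r1 r2
  assume x0: "x0 \<in> X0" and r1: "run_ok Sig delta x0 r1" and secret: "run_end x0 r1 \<in> XS"
    and r2: "run_ok Sig delta (run_end x0 r1) r2"
  let ?E = "nonsecret_estimate X Sig delta X0 SigO XS (proj SigO (run_label r1))"
  have "finite X" using assms(1) by (simp add: nfa_def)
  have "finite (Xhat Sig delta XS)"
    using Xhat_subset[OF assms(1,2)] \<open>finite X\<close> finite_subset by blast
  have estimates: "range ?E \<subseteq> Pow (X - XS)"
    by (simp add: image_subset_iff nonsecret_estimate_subset)
  have "finite (Pow (X - XS))" using \<open>finite X\<close> by simp
  obtain r2' where r2': "run_ok Sig delta (run_end x0 r1) r2'"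
    "length (proj SigO (run_label r2')) < card (Xhat Sig delta XS) * card (Pow (X - XS))"
    "?E (proj SigO (run_label r2')) = ?E (proj SigO (run_label r2))"
    using exists_run_with_short_observation[OF run_end_in_Xhat[OF secret] \<open>finite (Xhat Sig delta XS)\<close>
        estimates \<open>finite (Pow (X - XS))\<close> nonsecret_estimate_append_cong r2] by blast
  then have "length (proj SigO (run_label r2')) \<le> card (Xhat Sig delta XS) * 2 ^ card (X - XS) - 1"
    using \<open>finite X\<close> by (simp add: card_Pow)
  then show "?E (proj SigO (run_label r2)) \<noteq> {}"
    using short[unfolded K_SSO_iff_nonsecret_estimate] x0 r1 secret r2' by auto
qed

theorem corollary3p2:
  fixes X :: "'x set" and Sig :: "'e set" and delta :: "'x \<Rightarrow> 'e \<Rightarrow> 'x set"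
    and X0 :: "'x set" and SigO :: "'e set" and XS :: "'x set"
  assumes "nfa X Sig delta X0"
    and "SigO \<subseteq> Sig"
    and "XS \<subseteq> X" and "XS \<noteq> {}"
  shows "Inf_SSO X Sig delta X0 SigO XS \<longleftrightarrow>
    K_SSO X Sig delta X0 SigO XS (card (Xhat Sig delta XS) * 2 ^ card (X - XS) - 1)"
  using Inf_SSO_if_K_SSO_bound[OF assms(1,3)] by (auto simp: Inf_SSO_def)

end
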